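(* Consider the state process of the load-balancing system described in the context (under any dispatching policy), with $\lambda=1-N^{-\alpha}$, $0<\alpha<0.5$, and the Lyapunov function $V(s)=\frac{p\lambda}{\mu_2}-s_{1,2}$ on $\mathcal S^{(N)}$. Then for $s\in\mathcal S^{(N)}$: (i) if $V(s)\ge\left(\frac{p\mu_1}{\mu_2}+\frac12\right)\frac{\log N}{\sqrt N}$ and $s_{1,1}\ge\frac{\lambda}{\mu_1}-\frac{\log N}{\sqrt N}$, then $\nabla V(s)\le -\frac{\mu_2}{2}\frac{\log N}{\sqrt N}$; (ii) if $V(s)\ge\left(\frac{p\mu_1}{\mu_2}+\frac12\right)\frac{\log N}{\sqrt N}$ and $s_{1,1}\le\frac{\lambda}{\mu_1}-\frac{\log N}{\sqrt N}$, then $\nabla V(s)\le 1$.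
   Context: System: $N$ identical servers, Poisson arrivals of rate $\lambda N$. Service times are Coxian-2 with parameters $(\mu_1,\mu_2,p)$, $\mu_1,\mu_2>0$, $0\le p<1$: a job in service completes phase 1 at rate $\mu_1$; then with probability $1-p$ it leaves, and with probability $p$ it enters phase 2, completed at rate $\mu_2$; $\frac1{\mu_1}+\frac p{\mu_2}=1$. Each server holds at most $b$ jobs (one in service, the rest in its buffer, served in order). The state $s=(s_{i,m})$ has $s_{i,m}$ = fraction of servers with at least $i$ jobs whose job in service is in phase $m$; state space $\mathcal S^{(N)}=\{s\in\mathbb R^{b\times2}: 1\ge s_{1,m}\ge\cdots\ge s_{b,m}\ge0,\ s_{1,1}+s_{1,2}\le1,\ Ns_{i,m}\in\mathbb N\}$. The state evolves as a CTMC with transition rates $q_{s,s'}$ induced by arrivals (dispatched by the policy), phase-1 completions, and phase-2 completions; the drift of $V$ at $s$ is $\nabla V(s)=\sum_{s'\ne s}q_{s,s'}(V(s')-V(s))$. *)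

theory Defs
  imports Complex_Main
begin

text \<open>A state is s :: nat => nat => real, where s i m is the fraction of servers with
  at least i jobs whose job in service is in phase m (1 <= i <= b, m in {1,2});
  all other entries are 0 (so in particular s (b+1) m = 0).\<close>

type_synonym lbstate = "nat \<Rightarrow> nat \<Rightarrow> real"

definition state_space :: "nat \<Rightarrow> nat \<Rightarrow> lbstate set" where
  "state_space N b = {s.
     (\<forall>i m. \<not> (1 \<le> i \<and> i \<le> b \<and> (m = 1 \<or> m = 2)) \<longrightarrow> s i m = 0) \<and>
     (\<forall>m\<in>{1,2}. s 1 m \<le> 1 \<and> (\<forall>i. 1 \<le> i \<and> i < b \<longrightarrow> s (Suc i) m \<le> s i m) \<and> 0 \<le> s b m) \<and>
     s 1 1 + s 1 2 \<le> 1 \<and>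
     (\<forall>i m. \<exists>k::nat. real N * s i m = real k)}"

text \<open>Arrival to a server making it count in class (i,m): s i m increases by 1/N.
  (i,m)=(1,1): arrival to an idle server; i >= 2: arrival to a server with i-1 jobs
  whose job in service is in phase m.\<close>
definition arr_tgt :: "nat \<Rightarrow> lbstate \<Rightarrow> nat \<Rightarrow> nat \<Rightarrow> lbstate" where
  "arr_tgt N s i m = (\<lambda>j k. if j = i \<and> k = m then s j k + 1 / real N else s j k)"

text \<open>Phase-1 completion at a server with exactly i jobs, job moves to phase 2.\<close>
definition p1_to_p2 :: "nat \<Rightarrow> lbstate \<Rightarrow> nat \<Rightarrow> lbstate" where
  "p1_to_p2 N s i = (\<lambda>j k. if 1 \<le> j \<and> j \<le> i \<and> k = 1 then s j k - 1 / real N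
      else if 1 \<le> j \<and> j \<le> i \<and> k = 2 then s j k + 1 / real N else s j k)"

text \<open>Phase-1 completion at a server with exactly i jobs, job leaves; next job starts in phase 1.\<close>
definition p1_leave :: "nat \<Rightarrow> lbstate \<Rightarrow> nat \<Rightarrow> lbstate" where
  "p1_leave N s i = (\<lambda>j k. if j = i \<and> k = 1 then s j k - 1 / real N else s j k)"

text \<open>Phase-2 completion at a server with exactly i jobs; next job (if any) starts in phase 1.\<close>
definition p2_done :: "nat \<Rightarrow> lbstate \<Rightarrow> nat \<Rightarrow> lbstate" where
  "p2_done N s i = (\<lambda>j k. if 1 \<le> j \<and> j \<le> i \<and> k = 2 then s j k - 1 / real N
      else if 1 \<le> j \<and> j < i \<and> k = 1 then s j k + 1 / real N else s j k)"

definition arr_feasible :: "nat \<Rightarrow> lbstate \<Rightarrow> nat \<Rightarrow> nat \<Rightarrow> bool" where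
  "arr_feasible b s i m =
     ((i = 1 \<and> m = 1 \<and> s 1 1 + s 1 2 < 1) \<or>
      (2 \<le> i \<and> i \<le> b \<and> (m = 1 \<or> m = 2) \<and> s i m < s (i - 1) m))"

text \<open>A dispatching policy: sigma s i m is the probability that an arrival in state s
  is routed to a server so that s i m increases. It is supported on feasible classes and
  routes every arrival unless all servers are full (then the arrival is blocked).\<close>
definition policy :: "nat \<Rightarrow> nat \<Rightarrow> (lbstate \<Rightarrow> nat \<Rightarrow> nat \<Rightarrow> real) \<Rightarrow> bool" where
  "policy N b \<sigma> = (\<forall>s\<in>state_space N b.
      (\<forall>i m. 0 \<le> \<sigma> s i m) \<and>
      (\<forall>i m. \<not> arr_feasible b s i m \<longrightarrow> \<sigma> s i m = 0) \<and>
      (s b 1 + s b 2 < 1 \<longrightarrow> (\<Sum>i\<in>{1..b}. \<Sum>m\<in>{1,2}. \<sigma> s i m) = 1))"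

definition rate :: "nat \<Rightarrow> nat \<Rightarrow> real \<Rightarrow> real \<Rightarrow> real \<Rightarrow> real \<Rightarrow>
    (lbstate \<Rightarrow> nat \<Rightarrow> nat \<Rightarrow> real) \<Rightarrow> lbstate \<Rightarrow> lbstate \<Rightarrow> real" where
  "rate N b lam mu1 mu2 p \<sigma> s s' =
     (\<Sum>i\<in>{1..b}. \<Sum>m\<in>{1,2}. if s' = arr_tgt N s i m then lam * real N * \<sigma> s i m else 0)
   + (\<Sum>i\<in>{1..b}. if s' = p1_to_p2 N s i then real N * (s i 1 - s (Suc i) 1) * mu1 * p else 0)
   + (\<Sum>i\<in>{1..b}. if s' = p1_leave N s i then real N * (s i 1 - s (Suc i) 1) * mu1 * (1 - p) else 0)
   + (\<Sum>i\<in>{1..b}. if s' = p2_done N s i then real N * (s i 2 - s (Suc i) 2) * mu2 else 0)"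

text \<open>All possible targets from s (q s s' = 0 outside this finite set).\<close>
definition targets :: "nat \<Rightarrow> nat \<Rightarrow> lbstate \<Rightarrow> lbstate set" where
  "targets N b s = (\<lambda>(i, m). arr_tgt N s i m) ` ({1..b} \<times> {1,2})
     \<union> p1_to_p2 N s ` {1..b} \<union> p1_leave N s ` {1..b} \<union> p2_done N s ` {1..b}"

definition drift :: "nat \<Rightarrow> nat \<Rightarrow> real \<Rightarrow> real \<Rightarrow> real \<Rightarrow> real \<Rightarrow>
    (lbstate \<Rightarrow> nat \<Rightarrow> nat \<Rightarrow> real) \<Rightarrow> (lbstate \<Rightarrow> real) \<Rightarrow> lbstate \<Rightarrow> real" where
  "drift N b lam mu1 mu2 p \<sigma> V s =
     (\<Sum>s'\<in>targets N b s - {s}. rate N b lam mu1 mu2 p \<sigma> s s' * (V s' - V s))"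

end

theory Submission
  imports Defs
begin

text \<open>V depends on the state only through s 1 2. Arrivals never change s 1 2 (no
  policy may route a job to class (1,2)), nor do departures after phase 1; a phase-1
  completion moving the job to phase 2 at a server with i jobs raises s 1 2 by 1/N, and a
  phase-2 completion lowers it by 1/N. Summed over i these rates telescope, so the drift
  is the linear expression mu2 s 1 2 - p mu1 s 1 1 = p lam - p mu1 s 1 1 - mu2 V s, and
  both bounds are direct estimates of it.\<close>

lemma sum_indicator_weighted:
  fixes f :: "'a \<Rightarrow> real"
  assumes "finite A" "finite I" "g ` I \<subseteq> A" "f s = 0"
  shows "(\<Sum>x\<in>A - {s}. (\<Sum>i\<in>I. if x = g i then r i else 0) * f x) = (\<Sum>i\<in>I. r i * f (g i))"
proof -
  have single: "(\<Sum>x\<in>A - {s}. (if x = g i then r i else 0) * f x) = r i * f (g i)"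
    if "i \<in> I" for i
  proof -
    have "(\<Sum>x\<in>A - {s}. (if x = g i then r i else 0) * f x)
        = (\<Sum>x\<in>A - {s}. if x = g i then r i * f (g i) else 0)"
      by (rule sum.cong) auto
    also have "\<dots> = r i * f (g i)"
      using assms that by (auto simp: sum.delta')
    finally show ?thesis .
  qed
  have "(\<Sum>x\<in>A - {s}. (\<Sum>i\<in>I. if x = g i then r i else 0) * f x)
      = (\<Sum>i\<in>I. \<Sum>x\<in>A - {s}. (if x = g i then r i else 0) * f x)"
    unfolding sum_distrib_right by (rule sum.swap)
  also have "\<dots> = (\<Sum>i\<in>I. r i * f (g i))"
    using single by (rule sum.cong[OF refl])
  finally show ?thesis .
qed

text \<open>Transitions with coinciding targets are harmless: their rates are added up in
  rate, and a transition back to s itself contributes V s - V s = 0.\<close>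

lemma drift_eq_sum_over_transitions:
  "drift N b lam mu1 mu2 p \<sigma> V s =
      (\<Sum>i\<in>{1..b}. \<Sum>m\<in>{1,2}. lam * real N * \<sigma> s i m * (V (arr_tgt N s i m) - V s))
    + (\<Sum>i\<in>{1..b}. real N * (s i 1 - s (Suc i) 1) * mu1 * p * (V (p1_to_p2 N s i) - V s))
    + (\<Sum>i\<in>{1..b}. real N * (s i 1 - s (Suc i) 1) * mu1 * (1 - p) * (V (p1_leave N s i) - V s))
    + (\<Sum>i\<in>{1..b}. real N * (s i 2 - s (Suc i) 2) * mu2 * (V (p2_done N s i) - V s))"
proof -
  define A where "A = targets N b s"
  define f where "f x = V x - V s" for x
  have A: "finite A" "f s = 0"
    unfolding A_def targets_def f_def by auto
  have arr: "(\<lambda>m. arr_tgt N s i m) ` {1,2} \<subseteq> A" if "i \<in> {1..b}" for i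
    using that unfolding A_def targets_def by auto
  have "(\<Sum>x\<in>A - {s}. (\<Sum>i\<in>{1..b}. \<Sum>m\<in>{1,2}.
          if x = arr_tgt N s i m then lam * real N * \<sigma> s i m else 0) * f x)
      = (\<Sum>i\<in>{1..b}. \<Sum>x\<in>A - {s}. (\<Sum>m\<in>{1,2}.
          if x = arr_tgt N s i m then lam * real N * \<sigma> s i m else 0) * f x)"
    unfolding sum_distrib_right[of _ "{1..b}"] by (rule sum.swap)
  also have "\<dots> = (\<Sum>i\<in>{1..b}. \<Sum>m\<in>{1,2}. lam * real N * \<sigma> s i m * f (arr_tgt N s i m))"
  proof (intro sum.cong refl)
    fix i assume "i \<in> {1..b}"
    from sum_indicator_weighted[where f=f and s=s, OF A(1) _ arr[OF this] A(2)]
    show "(\<Sum>x\<in>A - {s}. (\<Sum>m\<in>{1,2}.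
          if x = arr_tgt N s i m then lam * real N * \<sigma> s i m else 0) * f x)
        = (\<Sum>m\<in>{1,2}. lam * real N * \<sigma> s i m * f (arr_tgt N s i m))"
      by simp
  qed
  moreover have "p1_to_p2 N s ` {1..b} \<subseteq> A" "p1_leave N s ` {1..b} \<subseteq> A"
      "p2_done N s ` {1..b} \<subseteq> A"
    unfolding A_def targets_def by auto
  note departures =
    this[THEN sum_indicator_weighted[where f=f and s=s, OF A(1) finite_atLeastAtMost _ A(2)]]
  ultimately show ?thesis
    unfolding drift_def rate_def A_def[symmetric] f_def[symmetric]
    by (simp add: distrib_right sum.distrib departures)
qed

lemma state_space_nonneg:
  assumes "s \<in> state_space N b"
  shows "0 \<le> s i m"
proof (cases "1 \<le> i \<and> i \<le> b \<and> (m = 1 \<or> m = 2)")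
  case True
  show ?thesis
  proof (rule inc_induct[of i b])
    show "0 \<le> s b m"
      using assms True unfolding state_space_def by auto
  next
    fix j assume "i \<le> j" "j < b" "0 \<le> s (Suc j) m"
    moreover have "s (Suc j) m \<le> s j m"
      using assms True \<open>i \<le> j\<close> \<open>j < b\<close> unfolding state_space_def by auto
    ultimately show "0 \<le> s j m" by linarith
  qed (use True in auto)
next
  case False
  with assms show ?thesis unfolding state_space_def by auto
qed

lemma policy_never_starts_in_phase2:
  assumes "policy N b \<sigma>" "s \<in> state_space N b"
  shows "\<sigma> s 1 2 = 0"
  using assms unfolding policy_def arr_feasible_def by auto

lemma sum_telescope_Icc:
  fixes g :: "nat \<Rightarrow> real"
  shows "(\<Sum>i=1..b. g i - g (Suc i)) = g 1 - g (Suc b)"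
  using sum_Suc_diff[of 1 b "\<lambda>i. - g i"] by simp

lemma drift_const_minus_s_1_2:
  assumes "N \<ge> 1" "policy N b \<sigma>" "s \<in> state_space N b"
  shows "drift N b lam mu1 mu2 p \<sigma> (\<lambda>x. c - x 1 2) s = mu2 * s 1 2 - mu1 * p * s 1 1"
proof -
  have beyond_buffer: "s (Suc b) m = 0" for m
    using assms(3) unfolding state_space_def by auto
  have "(\<Sum>m\<in>{1,2}. lam * real N * \<sigma> s i m * (s 1 2 - arr_tgt N s i m 1 2)) = 0" for i
    using policy_never_starts_in_phase2[OF assms(2,3)] by (auto simp: arr_tgt_def)
  moreover have "N \<noteq> 0"
    using assms(1) by simp
  moreover have "(\<Sum>i=1..b. (s i m - s (Suc i) m) * c) = s 1 m * c" for m c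
    using sum_telescope_Icc[of "\<lambda>i. s i m"] beyond_buffer by (simp flip: sum_distrib_right)
  ultimately show ?thesis
    unfolding drift_eq_sum_over_transitions
    by (simp add: p1_to_p2_def p1_leave_def p2_done_def sum_negf)
qed

theorem lemma13:
  fixes N b :: nat and \<alpha> \<mu>1 \<mu>2 p :: real
    and \<sigma> :: "lbstate \<Rightarrow> nat \<Rightarrow> nat \<Rightarrow> real" and s :: lbstate
  assumes "N \<ge> 1" and "b \<ge> 1"
    and "0 < \<alpha>" and "\<alpha> < 1/2"
    and "\<mu>1 > 0" and "\<mu>2 > 0" and "0 \<le> p" and "p < 1"
    and "1 / \<mu>1 + p / \<mu>2 = 1"
    and "policy N b \<sigma>"
    and "s \<in> state_space N b"
  defines "lam \<equiv> 1 - real N powr (- \<alpha>)"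
  defines "V \<equiv> (\<lambda>x::lbstate. p * lam / \<mu>2 - x 1 2)"
  shows "(V s \<ge> (p * \<mu>1 / \<mu>2 + 1/2) * (ln (real N) / sqrt (real N)) \<and>
           s 1 1 \<ge> lam / \<mu>1 - ln (real N) / sqrt (real N) \<longrightarrow>
           drift N b lam \<mu>1 \<mu>2 p \<sigma> V s \<le> - (\<mu>2 / 2) * (ln (real N) / sqrt (real N)))
       \<and> (V s \<ge> (p * \<mu>1 / \<mu>2 + 1/2) * (ln (real N) / sqrt (real N)) \<and>
           s 1 1 \<le> lam / \<mu>1 - ln (real N) / sqrt (real N) \<longrightarrow>
           drift N b lam \<mu>1 \<mu>2 p \<sigma> V s \<le> 1)"
proof -
  define L where "L = ln (real N) / sqrt (real N)"
  have drift_V: "drift N b lam \<mu>1 \<mu>2 p \<sigma> V s = p * lam - \<mu>1 * p * s 1 1 - \<mu>2 * V s"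
    using drift_const_minus_s_1_2[OF assms(1,10,11)] \<open>\<mu>2 > 0\<close> unfolding V_def
    by (simp add: algebra_simps)
  show ?thesis
    unfolding L_def[symmetric]
  proof (intro conjI impI; elim conjE)
    assume "(p * \<mu>1 / \<mu>2 + 1/2) * L \<le> V s" "lam / \<mu>1 - L \<le> s 1 1"
    then have "\<mu>1 * p * (lam / \<mu>1 - L) \<le> \<mu>1 * p * s 1 1"
      and "\<mu>2 * ((p * \<mu>1 / \<mu>2 + 1/2) * L) \<le> \<mu>2 * V s"
      using assms(5-7) by (simp_all add: mult_left_mono)
    moreover have "\<mu>1 * p * (lam / \<mu>1 - L) = p * lam - \<mu>1 * p * L"
      and "\<mu>2 * ((p * \<mu>1 / \<mu>2 + 1/2) * L) = \<mu>1 * p * L + \<mu>2 / 2 * L"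
      using assms(5,6) by (simp_all add: field_simps)
    ultimately show "drift N b lam \<mu>1 \<mu>2 p \<sigma> V s \<le> - (\<mu>2 / 2) * L"
      unfolding drift_V by linarith
  next
    assume "(p * \<mu>1 / \<mu>2 + 1/2) * L \<le> V s"
    moreover have "0 \<le> (p * \<mu>1 / \<mu>2 + 1/2) * L"
      using assms(1,5-7) unfolding L_def by simp
    ultimately have "0 \<le> \<mu>2 * V s"
      using \<open>\<mu>2 > 0\<close> by simp
    moreover have "0 \<le> \<mu>1 * p * s 1 1"
      using state_space_nonneg[OF assms(11)] assms(5,7) by simp
    moreover have "p * lam \<le> 1"
      using \<open>0 \<le> p\<close> \<open>p < 1\<close> mult_left_le[of lam p] unfolding lam_def by auto
    ultimately show "drift N b lam \<mu>1 \<mu>2 p \<sigma> V s \<le> 1"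
      unfolding drift_V by linarith
  qed
qed

end
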